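(* Let $H$ be a Hopf algebra and $K$ a locally affine Hopf subalgebra of $H$. If $H$ is generated as an algebra by $K$ and a single element $x\in H$, then $H$ is locally affine.
   Context: A Hopf algebra is locally affine if every finite subset of it is contained in a Hopf subalgebra that is finitely generated as an algebra. The base field $k$ is algebraically closed of characteristic zero. *)

theory Defs
  imports Main "HOL-Computational_Algebra.Polynomial"
begin

text \<open>The Hopf algebra H is the whole carrier type 'h (a ring with 1),
  made into an algebra over the field 'k by a scalar multiplication sc.
  Elements of H (x) H are represented by finite lists of pairs (a_i, b_i),
  standing for sum a_i (x) b_i. Since k is a field, two such lists represent the
  same tensor iff they agree under all pairs of linear functionals (and similarly
  for triple tensors); all tensor identities are stated in this way.\<close>

definition alg_closed_field :: "'k::field itself \<Rightarrow> bool" where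
  "alg_closed_field _ \<longleftrightarrow> (\<forall>p::'k poly. degree p > 0 \<longrightarrow> (\<exists>z. poly p z = 0))"

definition functional :: "('k::field \<Rightarrow> 'h::ring_1 \<Rightarrow> 'h) \<Rightarrow> ('h \<Rightarrow> 'k) \<Rightarrow> bool" where
  "functional sc \<phi> \<longleftrightarrow> Vector_Spaces.linear sc (*) \<phi>"

definition tens_eval :: "('h \<Rightarrow> 'k::field) \<Rightarrow> ('h \<Rightarrow> 'k) \<Rightarrow> ('h \<times> 'h) list \<Rightarrow> 'k" where
  "tens_eval \<phi> \<psi> l = (\<Sum>(a,b)\<leftarrow>l. \<phi> a * \<psi> b)"

definition tens_eq :: "('k::field \<Rightarrow> 'h::ring_1 \<Rightarrow> 'h) \<Rightarrow> ('h \<times> 'h) list \<Rightarrow> ('h \<times> 'h) list \<Rightarrow> bool" where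
  "tens_eq sc l m \<longleftrightarrow> (\<forall>\<phi> \<psi>. functional sc \<phi> \<and> functional sc \<psi> \<longrightarrow> tens_eval \<phi> \<psi> l = tens_eval \<phi> \<psi> m)"

definition tens_mult :: "('h::ring_1 \<times> 'h) list \<Rightarrow> ('h \<times> 'h) list \<Rightarrow> ('h \<times> 'h) list" where
  "tens_mult l m = concat (map (\<lambda>(a1,b1). map (\<lambda>(a2,b2). (a1 * a2, b1 * b2)) m) l)"

definition k_algebra :: "('k::field \<Rightarrow> 'h::ring_1 \<Rightarrow> 'h) \<Rightarrow> bool" where
  "k_algebra sc \<longleftrightarrow> vector_space sc \<and>
     (\<forall>c a b. sc c (a * b) = sc c a * b \<and> sc c (a * b) = a * sc c b)"

definition hopf_algebra ::
  "('k::field \<Rightarrow> 'h::ring_1 \<Rightarrow> 'h) \<Rightarrow> ('h \<Rightarrow> ('h \<times> 'h) list) \<Rightarrow> ('h \<Rightarrow> 'k) \<Rightarrow> ('h \<Rightarrow> 'h) \<Rightarrow> bool" where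
  "hopf_algebra sc \<Delta> \<epsilon> S \<longleftrightarrow>
     k_algebra sc \<and>
     \<comment> \<open>comultiplication: linear algebra map\<close>
     (\<forall>a b. tens_eq sc (\<Delta> (a + b)) (\<Delta> a @ \<Delta> b)) \<and>
     (\<forall>c a. tens_eq sc (\<Delta> (sc c a)) (map (\<lambda>(u,v). (sc c u, v)) (\<Delta> a))) \<and>
     (\<forall>a b. tens_eq sc (\<Delta> (a * b)) (tens_mult (\<Delta> a) (\<Delta> b))) \<and>
     tens_eq sc (\<Delta> 1) [(1,1)] \<and>
     \<comment> \<open>coassociativity\<close>
     (\<forall>h \<phi> \<psi> \<chi>. functional sc \<phi> \<and> functional sc \<psi> \<and> functional sc \<chi> \<longrightarrow>
        (\<Sum>(a,b)\<leftarrow>\<Delta> h. (\<Sum>(c,d)\<leftarrow>\<Delta> a. \<phi> c * \<psi> d * \<chi> b)) =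
        (\<Sum>(a,b)\<leftarrow>\<Delta> h. (\<Sum>(c,d)\<leftarrow>\<Delta> b. \<phi> a * \<psi> c * \<chi> d))) \<and>
     \<comment> \<open>counit: linear algebra map satisfying the counit axioms\<close>
     functional sc \<epsilon> \<and> (\<forall>a b. \<epsilon> (a * b) = \<epsilon> a * \<epsilon> b) \<and> \<epsilon> 1 = 1 \<and>
     (\<forall>h. (\<Sum>(a,b)\<leftarrow>\<Delta> h. sc (\<epsilon> a) b) = h \<and> (\<Sum>(a,b)\<leftarrow>\<Delta> h. sc (\<epsilon> b) a) = h) \<and>
     \<comment> \<open>antipode\<close>
     module_hom sc sc S \<and>
     (\<forall>h. (\<Sum>(a,b)\<leftarrow>\<Delta> h. S a * b) = sc (\<epsilon> h) 1 \<and> (\<Sum>(a,b)\<leftarrow>\<Delta> h. a * S b) = sc (\<epsilon> h) 1)"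

definition subalgebra :: "('k::field \<Rightarrow> 'h::ring_1 \<Rightarrow> 'h) \<Rightarrow> 'h set \<Rightarrow> bool" where
  "subalgebra sc A \<longleftrightarrow> module.subspace sc A \<and> 1 \<in> A \<and> (\<forall>a\<in>A. \<forall>b\<in>A. a * b \<in> A)"

definition hopf_subalgebra ::
  "('k::field \<Rightarrow> 'h::ring_1 \<Rightarrow> 'h) \<Rightarrow> ('h \<Rightarrow> ('h \<times> 'h) list) \<Rightarrow> ('h \<Rightarrow> 'h) \<Rightarrow> 'h set \<Rightarrow> bool" where
  "hopf_subalgebra sc \<Delta> S A \<longleftrightarrow> subalgebra sc A \<and>
     (\<forall>h\<in>A. \<exists>l. (\<forall>(a,b)\<in>set l. a \<in> A \<and> b \<in> A) \<and> tens_eq sc (\<Delta> h) l) \<and>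
     (\<forall>h\<in>A. S h \<in> A)"

definition alg_gen :: "('k::field \<Rightarrow> 'h::ring_1 \<Rightarrow> 'h) \<Rightarrow> 'h set \<Rightarrow> 'h set" where
  "alg_gen sc X = \<Inter>{A. subalgebra sc A \<and> X \<subseteq> A}"

definition finitely_generated :: "('k::field \<Rightarrow> 'h::ring_1 \<Rightarrow> 'h) \<Rightarrow> 'h set \<Rightarrow> bool" where
  "finitely_generated sc A \<longleftrightarrow> (\<exists>X. finite X \<and> alg_gen sc X = A)"

definition locally_affine ::
  "('k::field \<Rightarrow> 'h::ring_1 \<Rightarrow> 'h) \<Rightarrow> ('h \<Rightarrow> ('h \<times> 'h) list) \<Rightarrow> ('h \<Rightarrow> 'h) \<Rightarrow> 'h set \<Rightarrow> bool" where
  "locally_affine sc \<Delta> S K \<longleftrightarrow>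
     (\<forall>F. finite F \<and> F \<subseteq> K \<longrightarrow>
        (\<exists>A. hopf_subalgebra sc \<Delta> S A \<and> A \<subseteq> K \<and> F \<subseteq> A \<and> finitely_generated sc A))"

end

theory Submission
  imports Defs
begin

text \<open>Every element of H already lies in the subalgebra generated by x and finitely many elements
  of K. So, given a finite F \<subseteq> H, one finds a finite F0 \<subseteq> K such that F, the tensor legs of \<Delta> x
  and S x all lie in the subalgebra generated by x and F0; local affineness of K enlarges F0 to a
  finitely generated Hopf subalgebra A \<subseteq> K. The subalgebra B generated by x and A is finitely
  generated and contains F. It is a Hopf subalgebra: \<Delta> and S map its generators into B \<otimes> B
  resp. B, and the elements with this property form a subalgebra, because \<Delta> is multiplicative and
  S is anti-multiplicative.

  Since tensor identities are only given by testing against pairs (triples) of functionals, they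
  are first transferred to arbitrary bi- and trilinear maps by expanding one tensor leg in a
  basis; anti-multiplicativity of S then follows from the usual convolution argument.\<close>

section \<open>Multilinear maps and tensor identities\<close>

definition lin_map :: "('k::field \<Rightarrow> 'h::ring_1 \<Rightarrow> 'h) \<Rightarrow> ('h \<Rightarrow> 'h) \<Rightarrow> bool" where
  "lin_map sc f \<longleftrightarrow> (\<forall>a b. f (a + b) = f a + f b) \<and> (\<forall>c a. f (sc c a) = sc c (f a))"

definition bilin_map :: "('k::field \<Rightarrow> 'h::ring_1 \<Rightarrow> 'h) \<Rightarrow> ('h \<Rightarrow> 'h \<Rightarrow> 'h) \<Rightarrow> bool" where
  "bilin_map sc F \<longleftrightarrow> (\<forall>u. lin_map sc (F u)) \<and> (\<forall>v. lin_map sc (\<lambda>u. F u v))"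

definition trilin_map :: "('k::field \<Rightarrow> 'h::ring_1 \<Rightarrow> 'h) \<Rightarrow> ('h \<Rightarrow> 'h \<Rightarrow> 'h \<Rightarrow> 'h) \<Rightarrow> bool" where
  "trilin_map sc T \<longleftrightarrow>
     (\<forall>a b. lin_map sc (T a b)) \<and> (\<forall>a c. lin_map sc (\<lambda>b. T a b c)) \<and> (\<forall>b c. lin_map sc (\<lambda>a. T a b c))"

lemma sum_list_concat_map: "(\<Sum>x\<leftarrow>concat xs. f x) = (\<Sum>ys\<leftarrow>xs. \<Sum>x\<leftarrow>ys. f x)"
  by (induction xs) auto

lemma sum_list_pairs_swap:
  "(\<Sum>(x1,x2)\<leftarrow>xs. \<Sum>(y1,y2)\<leftarrow>ys. F x1 x2 y1 y2) =
   (\<Sum>(y1,y2)\<leftarrow>ys. \<Sum>(x1,x2)\<leftarrow>xs. F x1 x2 y1 y2 :: 'a::comm_monoid_add)"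
  by (induction xs) (simp_all add: split_def sum_list_addf)

lemma sum_list_pairs_const_mult:
  "(c::'a::semiring_0) * (\<Sum>(x,y)\<leftarrow>l. F x y) = (\<Sum>(x,y)\<leftarrow>l. c * F x y)"
  by (simp add: split_def sum_list_const_mult)

lemma sum_list_pairs_mult_const:
  "(\<Sum>(x,y)\<leftarrow>l. F x y) * (c::'a::semiring_0) = (\<Sum>(x,y)\<leftarrow>l. F x y * c)"
  by (simp add: split_def sum_list_mult_const)

locale sc_algebra =
  fixes sc :: "'k::field \<Rightarrow> 'h::ring_1 \<Rightarrow> 'h"
  assumes k_algebra: "k_algebra sc"
begin

sublocale V: vector_space sc
  using k_algebra by (simp add: k_algebra_def)

lemma scale_mult_left: "sc c (a * b) = sc c a * b"
  using k_algebra unfolding k_algebra_def by blast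

lemma scale_mult_right: "sc c (a * b) = a * sc c b"
  using k_algebra unfolding k_algebra_def by blast

lemma functional_iff:
  "functional sc \<phi> \<longleftrightarrow> (\<forall>a b. \<phi> (a + b) = \<phi> a + \<phi> b) \<and> (\<forall>c a. \<phi> (sc c a) = c * \<phi> a)"
proof -
  have "vector_space ((*) :: 'k \<Rightarrow> 'k \<Rightarrow> 'k)"
    by (simp add: vector_space_def algebra_simps)
  with V.vector_space_axioms show ?thesis
    unfolding functional_def module_hom_iff_linear[symmetric] module_hom_iff module_iff_vector_space
    by blast
qed

lemma functional_add: "functional sc \<phi> \<Longrightarrow> \<phi> (a + b) = \<phi> a + \<phi> b"
  by (simp add: functional_iff)

lemma functional_scale: "functional sc \<phi> \<Longrightarrow> \<phi> (sc c a) = c * \<phi> a"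
  by (simp add: functional_iff)

lemma functional_zero: "functional sc \<phi> \<Longrightarrow> \<phi> 0 = 0"
  using functional_scale[of \<phi> 0 0] by simp

lemma functional_diff: "functional sc \<phi> \<Longrightarrow> \<phi> (a - b) = \<phi> a - \<phi> b"
  using functional_add[of \<phi> "a - b" b] by simp

lemma functional_sum_list:
  "functional sc \<phi> \<Longrightarrow> \<phi> (\<Sum>(u,v)\<leftarrow>l. g u v) = (\<Sum>(u,v)\<leftarrow>l. \<phi> (g u v))"
  by (induction l) (auto simp: functional_zero functional_add)

lemma functional_mult_right: "functional sc \<phi> \<Longrightarrow> functional sc (\<lambda>z. \<phi> (z * c))"
  by (simp add: functional_iff algebra_simps flip: scale_mult_left)

lemma functional_mult_left: "functional sc \<phi> \<Longrightarrow> functional sc (\<lambda>z. \<phi> (c * z))"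
  by (simp add: functional_iff algebra_simps flip: scale_mult_right)

lemma lin_map_add: "lin_map sc f \<Longrightarrow> f (a + b) = f a + f b"
  by (simp add: lin_map_def)

lemma lin_map_scale: "lin_map sc f \<Longrightarrow> f (sc c a) = sc c (f a)"
  by (simp add: lin_map_def)

lemma lin_map_zero: "lin_map sc f \<Longrightarrow> f 0 = 0"
  using lin_map_scale[of f 0 0] by simp

lemma lin_map_sum: "lin_map sc f \<Longrightarrow> f (sum g A) = (\<Sum>x\<in>A. f (g x))"
  by (induction A rule: infinite_finite_induct) (auto simp: lin_map_zero lin_map_add)

lemma lin_map_sum_list:
  "lin_map sc f \<Longrightarrow> f (\<Sum>(u,v)\<leftarrow>l. g u v) = (\<Sum>(u,v)\<leftarrow>l. f (g u v))"
  by (induction l) (auto simp: lin_map_zero lin_map_add)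

lemma lin_map_id: "lin_map sc (\<lambda>x. x)"
  by (simp add: lin_map_def)

lemma lin_map_mult_right: "lin_map sc f \<Longrightarrow> lin_map sc (\<lambda>x. f x * c)"
  by (simp add: lin_map_def algebra_simps scale_mult_left)

lemma lin_map_mult_left: "lin_map sc f \<Longrightarrow> lin_map sc (\<lambda>x. c * f x)"
  by (simp add: lin_map_def algebra_simps scale_mult_right)

lemma lin_map_comp: "lin_map sc f \<Longrightarrow> lin_map sc g \<Longrightarrow> lin_map sc (\<lambda>x. f (g x))"
  by (simp add: lin_map_def)

lemma lin_map_sum_list_fun:
  "(\<And>u v. lin_map sc (\<lambda>x. G x u v)) \<Longrightarrow> lin_map sc (\<lambda>x. \<Sum>(u,v)\<leftarrow>l. G x u v)"
  by (induction l) (auto simp: lin_map_def add_ac V.scale_right_distrib)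

lemma scale_sum_list: "sc c (\<Sum>(x,y)\<leftarrow>l. F x y) = (\<Sum>(x,y)\<leftarrow>l. sc c (F x y))"
  by (induction l) (auto simp: V.scale_right_distrib)

lemma bilin_map_left: "bilin_map sc F \<Longrightarrow> lin_map sc (\<lambda>u. F u v)"
  by (simp add: bilin_map_def)

lemma bilin_map_right: "bilin_map sc F \<Longrightarrow> lin_map sc (F u)"
  by (simp add: bilin_map_def)

lemma finite_coordinates:
  assumes "finite X"
  obtains E \<psi> where "finite E" "\<And>e. functional sc (\<psi> e)" "\<And>v. v \<in> X \<Longrightarrow> v = (\<Sum>e\<in>E. sc (\<psi> e v) e)"
proof -
  define B where "B = V.extend_basis {}"
  have indep: "V.independent B" and span: "V.span B = UNIV"
    unfolding B_def using V.independent_extend_basis V.span_extend_basis V.independent_empty by auto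
  define \<psi> where "\<psi> e v = V.representation B v e" for e v
  have "functional sc (\<psi> e)" for e
    unfolding functional_def \<psi>_def by (rule V.linear_representation[OF indep span])
  moreover define E where "E = (\<Union>v\<in>X. {b. V.representation B v b \<noteq> 0})"
  moreover have "finite E"
    unfolding E_def using assms V.finite_representation by auto
  moreover have "v = (\<Sum>e\<in>E. sc (\<psi> e v) e)" if "v \<in> X" for v
  proof -
    have "(\<Sum>e\<in>E. sc (\<psi> e v) e) = (\<Sum>b | V.representation B v b \<noteq> 0. sc (V.representation B v b) b)"
      unfolding \<psi>_def using \<open>finite E\<close> that by (intro sum.mono_neutral_cong_right) (auto simp: E_def)
    also have "\<dots> = v"
      using V.sum_nonzero_representation_eq[OF indep] span by auto
    finally show ?thesis by simp
  qed
  ultimately show ?thesis using that by blast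
qed

lemma functionals_separate:
  assumes "\<And>\<phi>. functional sc \<phi> \<Longrightarrow> \<phi> a = \<phi> b"
  shows "a = b"
proof -
  obtain E \<psi> where "finite E" and \<psi>: "\<And>e. functional sc (\<psi> e)"
    and rep: "a - b = (\<Sum>e\<in>E. sc (\<psi> e (a - b)) e)"
    using finite_coordinates[of "{a - b}"] by auto
  have "\<psi> e (a - b) = 0" for e
    using assms[OF \<psi>] functional_diff[OF \<psi>] by simp
  then show ?thesis using rep by simp
qed

lemma bilin_map_sum_list_expand:
  assumes F: "bilin_map sc F"
    and rep: "\<And>v. v \<in> snd ` set l \<Longrightarrow> v = (\<Sum>e\<in>E. sc (\<psi> e v) e)"
  shows "(\<Sum>(u,v)\<leftarrow>l. F u v) = (\<Sum>e\<in>E. F (\<Sum>(u,v)\<leftarrow>l. sc (\<psi> e v) u) e)"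
  using rep
proof (induction l)
  case Nil
  then show ?case using lin_map_zero[OF bilin_map_left[OF F]] by simp
next
  case (Cons p l)
  obtain u v where p: "p = (u, v)" by force
  have "F u v = F u (\<Sum>e\<in>E. sc (\<psi> e v) e)"
    using Cons.prems[of v] p by simp
  also have "\<dots> = (\<Sum>e\<in>E. F (sc (\<psi> e v) u) e)"
    by (simp add: lin_map_sum[OF bilin_map_right[OF F]] lin_map_scale[OF bilin_map_right[OF F]]
        lin_map_scale[OF bilin_map_left[OF F]])
  finally show ?case
    using Cons p by (simp add: lin_map_add[OF bilin_map_left[OF F]] sum.distrib)
qed

lemma tens_eq_bilin_map_sum:
  assumes eq: "tens_eq sc l m" and F: "bilin_map sc F"
  shows "(\<Sum>(u,v)\<leftarrow>l. F u v) = (\<Sum>(u,v)\<leftarrow>m. F u v)"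
proof -
  obtain E \<psi> where \<psi>: "\<And>e. functional sc (\<psi> e)"
    and rep: "\<And>v. v \<in> snd ` set l \<union> snd ` set m \<Longrightarrow> v = (\<Sum>e\<in>E. sc (\<psi> e v) e)"
    by (rule finite_coordinates[of "snd ` set l \<union> snd ` set m"]) auto
  have \<phi>_eval: "\<phi> (\<Sum>(u,v)\<leftarrow>k. sc (\<psi> e v) u) = tens_eval \<phi> (\<psi> e) k" if "functional sc \<phi>" for \<phi> e k
    unfolding functional_sum_list[OF that] tens_eval_def
    by (simp add: functional_scale[OF that] split_def mult.commute)
  have "(\<Sum>(u,v)\<leftarrow>l. sc (\<psi> e v) u) = (\<Sum>(u,v)\<leftarrow>m. sc (\<psi> e v) u)" for e
    using eq \<psi> by (intro functionals_separate) (simp add: \<phi>_eval tens_eq_def)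
  then show ?thesis
    using bilin_map_sum_list_expand[OF F, where E=E and \<psi>=\<psi>] rep
    by simp
qed

lemma trilin_map_sum_list_expand:
  assumes T: "trilin_map sc T"
    and rep: "\<And>v. v \<in> (snd \<circ> snd) ` set l \<Longrightarrow> v = (\<Sum>e\<in>E. sc (\<psi> e v) e)"
  shows "(\<Sum>(a,b,c)\<leftarrow>l. T a b c) = (\<Sum>e\<in>E. \<Sum>(a,b,c)\<leftarrow>l. T a (sc (\<psi> e c) b) e)"
  using rep
proof (induction l)
  case (Cons p l)
  obtain a b c where p: "p = (a, b, c)" by (cases p) auto
  have lin3: "lin_map sc (T a b)" and lin2: "lin_map sc (\<lambda>u. T a u e)" for e
    using T unfolding trilin_map_def by auto
  have "T a b c = T a b (\<Sum>e\<in>E. sc (\<psi> e c) e)"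
    using Cons.prems[of c] p by simp
  also have "\<dots> = (\<Sum>e\<in>E. T a (sc (\<psi> e c) b) e)"
    by (simp add: lin_map_sum[OF lin3] lin_map_scale[OF lin3] lin_map_scale[OF lin2])
  finally show ?case
    using Cons p by (simp add: sum.distrib)
qed simp

lemma trilin_map_sum_list_eq:
  assumes eq: "\<And>\<phi> \<psi> \<chi>. functional sc \<phi> \<Longrightarrow> functional sc \<psi> \<Longrightarrow> functional sc \<chi> \<Longrightarrow>
      (\<Sum>(a,b,c)\<leftarrow>l. \<phi> a * \<psi> b * \<chi> c) = (\<Sum>(a,b,c)\<leftarrow>m. \<phi> a * \<psi> b * \<chi> c)"
    and T: "trilin_map sc T"
  shows "(\<Sum>(a,b,c)\<leftarrow>l. T a b c) = (\<Sum>(a,b,c)\<leftarrow>m. T a b c)"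
proof -
  obtain E \<psi> where \<psi>: "\<And>e. functional sc (\<psi> e)"
    and rep: "\<And>v. v \<in> (snd \<circ> snd) ` set l \<union> (snd \<circ> snd) ` set m \<Longrightarrow> v = (\<Sum>e\<in>E. sc (\<psi> e v) e)"
    by (rule finite_coordinates[of "(snd \<circ> snd) ` set l \<union> (snd \<circ> snd) ` set m"]) auto
  have "(\<Sum>(a,b,c)\<leftarrow>l. T a (sc (\<psi> e c) b) e) = (\<Sum>(a,b,c)\<leftarrow>m. T a (sc (\<psi> e c) b) e)" for e
  proof -
    let ?contract = "map (\<lambda>(a,b,c). (a, sc (\<psi> e c) b))"
    have contract_sum: "(\<Sum>(a,b,c)\<leftarrow>k. T a (sc (\<psi> e c) b) e) = (\<Sum>(u,v)\<leftarrow>?contract k. T u v e)" for k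
      by (induction k) auto
    have contract_eval: "tens_eval \<phi> \<chi> (?contract k) = (\<Sum>(a,b,c)\<leftarrow>k. \<phi> a * \<chi> b * \<psi> e c)"
      if "functional sc \<chi>" for \<phi> \<chi> k
      unfolding tens_eval_def by (induction k) (auto simp: functional_scale[OF that])
    have "tens_eq sc (?contract l) (?contract m)"
      unfolding tens_eq_def
    proof (intro allI impI)
      fix \<phi> \<chi> assume "functional sc \<phi> \<and> functional sc \<chi>"
      then show "tens_eval \<phi> \<chi> (?contract l) = tens_eval \<phi> \<chi> (?contract m)"
        using eq[OF _ _ \<psi>] by (simp add: contract_eval)
    qed
    moreover have "bilin_map sc (\<lambda>u v. T u v e)"
      using T unfolding trilin_map_def bilin_map_def by auto
    ultimately show ?thesis
      unfolding contract_sum by (rule tens_eq_bilin_map_sum)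
  qed
  moreover have "(\<Sum>(a,b,c)\<leftarrow>k. T a b c) = (\<Sum>e\<in>E. \<Sum>(a,b,c)\<leftarrow>k. T a (sc (\<psi> e c) b) e)"
    if "k = l \<or> k = m" for k
    using that by (intro trilin_map_sum_list_expand[OF T] rep) auto
  ultimately show ?thesis by simp
qed

lemma tens_eq_trans: "tens_eq sc l m \<Longrightarrow> tens_eq sc m n \<Longrightarrow> tens_eq sc l n"
  by (simp add: tens_eq_def)

lemma tens_eq_append: "tens_eq sc l l' \<Longrightarrow> tens_eq sc m m' \<Longrightarrow> tens_eq sc (l @ m) (l' @ m')"
  by (simp add: tens_eq_def tens_eval_def)

lemma tens_eq_scale:
  assumes "tens_eq sc l l'"
  shows "tens_eq sc (map (\<lambda>(u,v). (sc c u, v)) l) (map (\<lambda>(u,v). (sc c u, v)) l')"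
proof -
  have "tens_eval \<phi> \<psi> (map (\<lambda>(u,v). (sc c u, v)) k) = c * tens_eval \<phi> \<psi> k" if "functional sc \<phi>" for \<phi> \<psi> k
    unfolding tens_eval_def by (induction k) (auto simp: functional_scale[OF that] algebra_simps)
  with assms show ?thesis
    by (simp add: tens_eq_def)
qed

lemma sum_list_tens_mult:
  "(\<Sum>(u,v)\<leftarrow>tens_mult l m. F u v) = (\<Sum>(a1,b1)\<leftarrow>l. \<Sum>(a2,b2)\<leftarrow>m. F (a1 * a2) (b1 * b2))"
  unfolding tens_mult_def sum_list_concat_map by (simp add: split_def o_def)

lemma tens_eq_tens_mult:
  assumes "tens_eq sc l l'" and "tens_eq sc m m'"
  shows "tens_eq sc (tens_mult l m) (tens_mult l' m')"
proof -
  have "tens_eq sc (tens_mult l m) (tens_mult l' m)"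
    using assms(1) functional_mult_right
    by (simp add: tens_eq_def tens_eval_def sum_list_tens_mult sum_list_pairs_swap[where ys=m])
  moreover have "tens_eq sc (tens_mult l' m) (tens_mult l' m')"
    using assms(2) functional_mult_left
    by (simp add: tens_eq_def tens_eval_def sum_list_tens_mult)
  ultimately show ?thesis by (rule tens_eq_trans)
qed

section \<open>Generated subalgebras\<close>

lemma subalgebraI:
  assumes "0 \<in> A" "\<And>a b. a \<in> A \<Longrightarrow> b \<in> A \<Longrightarrow> a + b \<in> A" "\<And>c a. a \<in> A \<Longrightarrow> sc c a \<in> A"
    "1 \<in> A" "\<And>a b. a \<in> A \<Longrightarrow> b \<in> A \<Longrightarrow> a * b \<in> A"
  shows "subalgebra sc A"
  unfolding subalgebra_def using assms by (auto simp: V.subspace_def)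

lemma subalgebraD:
  assumes "subalgebra sc A"
  shows "0 \<in> A" "\<And>a b. a \<in> A \<Longrightarrow> b \<in> A \<Longrightarrow> a + b \<in> A" "\<And>c a. a \<in> A \<Longrightarrow> sc c a \<in> A"
    "1 \<in> A" "\<And>a b. a \<in> A \<Longrightarrow> b \<in> A \<Longrightarrow> a * b \<in> A"
  using assms unfolding subalgebra_def by (auto simp: V.subspace_def)

lemma subalgebra_alg_gen: "subalgebra sc (alg_gen sc X)"
  by (rule subalgebraI) (auto simp: alg_gen_def dest: subalgebraD)

lemma alg_gen_superset: "X \<subseteq> alg_gen sc X"
  by (auto simp: alg_gen_def)

lemma alg_gen_least: "subalgebra sc A \<Longrightarrow> X \<subseteq> A \<Longrightarrow> alg_gen sc X \<subseteq> A"
  by (auto simp: alg_gen_def)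

lemma alg_gen_mono: "X \<subseteq> Y \<Longrightarrow> alg_gen sc X \<subseteq> alg_gen sc Y"
  using alg_gen_least[OF subalgebra_alg_gen, of X Y] alg_gen_superset[of Y] by blast

lemma alg_gen_insert_alg_gen: "alg_gen sc (insert x (alg_gen sc X)) = alg_gen sc (insert x X)"
proof
  show "alg_gen sc (insert x X) \<subseteq> alg_gen sc (insert x (alg_gen sc X))"
    using alg_gen_superset by (intro alg_gen_mono) blast
  have "alg_gen sc X \<subseteq> alg_gen sc (insert x X)"
    by (rule alg_gen_mono) auto
  then show "alg_gen sc (insert x (alg_gen sc X)) \<subseteq> alg_gen sc (insert x X)"
    using alg_gen_superset[of "insert x X"] by (intro alg_gen_least[OF subalgebra_alg_gen]) auto
qed

lemma alg_gen_finite_support: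
  assumes "h \<in> alg_gen sc X"
  shows "\<exists>Y. finite Y \<and> Y \<subseteq> X \<and> h \<in> alg_gen sc Y"
proof -
  define P where "P = {h. \<exists>Y. finite Y \<and> Y \<subseteq> X \<and> h \<in> alg_gen sc Y}"
  have closed2: "f a b \<in> P"
    if a: "a \<in> P" and b: "b \<in> P" and f: "\<And>Y. \<lbrakk>a \<in> alg_gen sc Y; b \<in> alg_gen sc Y\<rbrakk> \<Longrightarrow> f a b \<in> alg_gen sc Y"
    for f a b
  proof -
    obtain Y Y' where "finite Y" "Y \<subseteq> X" "a \<in> alg_gen sc Y" "finite Y'" "Y' \<subseteq> X" "b \<in> alg_gen sc Y'"
      using a b unfolding P_def by blast
    moreover from this have "a \<in> alg_gen sc (Y \<union> Y')" "b \<in> alg_gen sc (Y \<union> Y')"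
      using alg_gen_mono[of Y "Y \<union> Y'"] alg_gen_mono[of Y' "Y \<union> Y'"] by auto
    ultimately show ?thesis
      unfolding P_def using f by (intro CollectI exI[of _ "Y \<union> Y'"]) auto
  qed
  have "subalgebra sc P"
  proof (rule subalgebraI)
    show "0 \<in> P" "1 \<in> P"
      unfolding P_def using subalgebraD(1,4)[OF subalgebra_alg_gen[of "{}"]] by blast+
    show "sc c a \<in> P" if "a \<in> P" for c a
      using that subalgebraD(3)[OF subalgebra_alg_gen] unfolding P_def by blast
    show "a + b \<in> P" "a * b \<in> P" if "a \<in> P" "b \<in> P" for a b
      using closed2[OF that, of "(+)"] closed2[OF that, of "(*)"] subalgebraD(2,5)[OF subalgebra_alg_gen]
      by auto
  qed
  moreover have "X \<subseteq> P"
  proof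
    fix g assume "g \<in> X"
    then show "g \<in> P"
      unfolding P_def using alg_gen_superset[of "{g}"] by blast
  qed
  ultimately have "alg_gen sc X \<subseteq> P"
    by (rule alg_gen_least)
  with assms show ?thesis
    unfolding P_def by blast
qed

lemma alg_gen_finite_subset:
  assumes "finite Z" "Z \<subseteq> alg_gen sc X"
  obtains Y where "finite Y" "Y \<subseteq> X" "Z \<subseteq> alg_gen sc Y"
proof -
  have "\<forall>z\<in>Z. \<exists>Y. finite Y \<and> Y \<subseteq> X \<and> z \<in> alg_gen sc Y"
    using assms(2) alg_gen_finite_support by blast
  then obtain Yz where Yz: "\<forall>z\<in>Z. finite (Yz z) \<and> Yz z \<subseteq> X \<and> z \<in> alg_gen sc (Yz z)"
    by (metis bchoice)
  show ?thesis
  proof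
    show "finite (\<Union>(Yz ` Z))" "\<Union>(Yz ` Z) \<subseteq> X"
      using Yz assms(1) by auto
    show "Z \<subseteq> alg_gen sc (\<Union>(Yz ` Z))"
    proof
      fix z assume "z \<in> Z"
      then show "z \<in> alg_gen sc (\<Union>(Yz ` Z))"
        using Yz alg_gen_mono[of "Yz z" "\<Union>(Yz ` Z)"] by blast
    qed
  qed
qed

end

section \<open>Convolution and the antipode\<close>

locale hopf =
  fixes sc :: "'k::field \<Rightarrow> 'h::ring_1 \<Rightarrow> 'h" and D :: "'h \<Rightarrow> ('h \<times> 'h) list"
    and eps :: "'h \<Rightarrow> 'k" and S :: "'h \<Rightarrow> 'h"
  assumes hopf_algebra: "hopf_algebra sc D eps S"

sublocale hopf \<subseteq> sc_algebra sc
  using hopf_algebra by unfold_locales (simp add: hopf_algebra_def)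

context hopf
begin

lemma comult_add: "tens_eq sc (D (a + b)) (D a @ D b)"
  and comult_scale: "tens_eq sc (D (sc c a)) (map (\<lambda>(u,v). (sc c u, v)) (D a))"
  and comult_mult: "tens_eq sc (D (a * b)) (tens_mult (D a) (D b))"
  and comult_one: "tens_eq sc (D 1) [(1, 1)]"
  and coassoc: "\<lbrakk>functional sc \<phi>; functional sc \<psi>; functional sc \<chi>\<rbrakk> \<Longrightarrow>
     (\<Sum>(a,b)\<leftarrow>D h. \<Sum>(c,d)\<leftarrow>D a. \<phi> c * \<psi> d * \<chi> b) = (\<Sum>(a,b)\<leftarrow>D h. \<Sum>(c,d)\<leftarrow>D b. \<phi> a * \<psi> c * \<chi> d)"
  and counit_mult: "eps (a * b) = eps a * eps b"
  and counit_one: "eps 1 = 1"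
  and counit_left: "(\<Sum>(a,b)\<leftarrow>D h. sc (eps a) b) = h"
  and counit_right: "(\<Sum>(a,b)\<leftarrow>D h. sc (eps b) a) = h"
  and antipode_left: "(\<Sum>(a,b)\<leftarrow>D h. S a * b) = sc (eps h) 1"
  and antipode_right: "(\<Sum>(a,b)\<leftarrow>D h. a * S b) = sc (eps h) 1"
  using hopf_algebra unfolding hopf_algebra_def by blast+

lemma lin_map_antipode: "lin_map sc S"
  using hopf_algebra unfolding hopf_algebra_def lin_map_def module_hom_iff by blast

lemma comult_zero: "tens_eq sc (D 0) []"
proof -
  have "tens_eval \<phi> \<psi> (D 0) = tens_eval \<phi> \<psi> (D 0) + tens_eval \<phi> \<psi> (D 0)"
    if "functional sc \<phi>" "functional sc \<psi>" for \<phi> \<psi>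
    using comult_add[of 0 0] that unfolding tens_eq_def tens_eval_def by simp
  then show ?thesis
    unfolding tens_eq_def by (metis add_cancel_left_right tens_eval_def sum_list.Nil list.map(1))
qed

lemma comult_mult_bilin_map:
  assumes "bilin_map sc F"
  shows "(\<Sum>(u,v)\<leftarrow>D (a * b). F u v) = (\<Sum>(a1,a2)\<leftarrow>D a. \<Sum>(b1,b2)\<leftarrow>D b. F (a1 * b1) (a2 * b2))"
  using tens_eq_bilin_map_sum[OF comult_mult assms] by (simp add: sum_list_tens_mult)

lemma coassoc_trilin_map:
  assumes "trilin_map sc T"
  shows "(\<Sum>(a,b)\<leftarrow>D h. \<Sum>(c,d)\<leftarrow>D a. T c d b) = (\<Sum>(a,b)\<leftarrow>D h. \<Sum>(c,d)\<leftarrow>D b. T a c d)"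
proof -
  define l where "l = concat (map (\<lambda>(a,b). map (\<lambda>(c,d). (c, d, b)) (D a)) (D h))"
  define m where "m = concat (map (\<lambda>(a,b). map (\<lambda>(c,d). (a, c, d)) (D b)) (D h))"
  have l_sum: "(\<Sum>(x,y,z)\<leftarrow>l. R x y z) = (\<Sum>(a,b)\<leftarrow>D h. \<Sum>(c,d)\<leftarrow>D a. R c d b)" for R :: "_ \<Rightarrow> _ \<Rightarrow> _ \<Rightarrow> 'a::comm_monoid_add"
    unfolding l_def sum_list_concat_map by (simp add: split_def o_def)
  have m_sum: "(\<Sum>(x,y,z)\<leftarrow>m. R x y z) = (\<Sum>(a,b)\<leftarrow>D h. \<Sum>(c,d)\<leftarrow>D b. R a c d)" for R :: "_ \<Rightarrow> _ \<Rightarrow> _ \<Rightarrow> 'a::comm_monoid_add"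
    unfolding m_def sum_list_concat_map by (simp add: split_def o_def)
  have "(\<Sum>(x,y,z)\<leftarrow>l. T x y z) = (\<Sum>(x,y,z)\<leftarrow>m. T x y z)"
    using coassoc by (intro trilin_map_sum_list_eq[OF _ assms]) (simp add: l_sum m_sum)
  then show ?thesis
    unfolding l_sum m_sum .
qed

definition conv :: "('h \<Rightarrow> 'h \<Rightarrow> 'h) \<Rightarrow> ('h \<Rightarrow> 'h \<Rightarrow> 'h) \<Rightarrow> 'h \<Rightarrow> 'h \<Rightarrow> 'h" where
  "conv f g a b = (\<Sum>(a1,a2)\<leftarrow>D a. \<Sum>(b1,b2)\<leftarrow>D b. f a1 b1 * g a2 b2)"

lemma conv_assoc:
  assumes f: "bilin_map sc f" and g: "bilin_map sc g" and h: "bilin_map sc h"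
  shows "conv f (conv g h) a b = conv (conv f g) h a b"
proof -
  note lin = bilin_map_left[OF f] bilin_map_left[OF g] bilin_map_left[OF h]
    bilin_map_right[OF f] bilin_map_right[OF g] bilin_map_right[OF h]
  define R where "R a1 a3 a4 = (\<Sum>(b1,b2)\<leftarrow>D b. \<Sum>(b3,b4)\<leftarrow>D b2. f a1 b1 * (g a3 b3 * h a4 b4))"
    for a1 a3 a4
  have "conv f (conv g h) a b = (\<Sum>(a1,a2)\<leftarrow>D a. \<Sum>(a3,a4)\<leftarrow>D a2. R a1 a3 a4)"
    unfolding conv_def R_def by (simp add: sum_list_pairs_const_mult sum_list_pairs_swap[where ys="D b"])
  also have "\<dots> = (\<Sum>(u,a4)\<leftarrow>D a. \<Sum>(a1,a3)\<leftarrow>D u. R a1 a3 a4)"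
    unfolding R_def
    by (intro coassoc_trilin_map[symmetric])
      (auto simp: trilin_map_def intro!: lin_map_sum_list_fun lin_map_mult_left lin_map_mult_right lin)
  also have "\<dots> = (\<Sum>(u,a4)\<leftarrow>D a. \<Sum>(a1,a3)\<leftarrow>D u.
      \<Sum>(v,b4)\<leftarrow>D b. \<Sum>(b1,b3)\<leftarrow>D v. f a1 b1 * (g a3 b3 * h a4 b4))"
    unfolding R_def
    by (subst coassoc_trilin_map)
      (auto simp: trilin_map_def intro!: lin_map_mult_left lin_map_mult_right lin)
  also have "\<dots> = conv (conv f g) h a b"
    unfolding conv_def
    by (simp add: sum_list_pairs_mult_const mult.assoc sum_list_pairs_swap[where ys="D b"])
  finally show ?thesis .
qed

lemma conv_counit_right:
  assumes f: "bilin_map sc f"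
  shows "conv f (\<lambda>x y. sc (eps x * eps y) 1) a b = f a b"
proof -
  have "f a b = f (\<Sum>(a1,a2)\<leftarrow>D a. sc (eps a2) a1) (\<Sum>(b1,b2)\<leftarrow>D b. sc (eps b2) b1)"
    by (simp only: counit_right)
  also have "\<dots> = (\<Sum>(a1,a2)\<leftarrow>D a. \<Sum>(b1,b2)\<leftarrow>D b. sc (eps a2) (sc (eps b2) (f a1 b1)))"
    by (simp add: lin_map_sum_list[OF bilin_map_left[OF f]] lin_map_sum_list[OF bilin_map_right[OF f]]
        lin_map_scale[OF bilin_map_left[OF f]] lin_map_scale[OF bilin_map_right[OF f]]
        scale_sum_list sum_list_pairs_swap[where xs="D b"] mult.commute)
  also have "\<dots> = conv f (\<lambda>x y. sc (eps x * eps y) 1) a b"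
    unfolding conv_def by (simp add: mult.commute flip: scale_mult_right)
  finally show ?thesis by simp
qed

lemma conv_counit_left:
  assumes f: "bilin_map sc f"
  shows "conv (\<lambda>x y. sc (eps x * eps y) 1) f a b = f a b"
proof -
  have "f a b = f (\<Sum>(a1,a2)\<leftarrow>D a. sc (eps a1) a2) (\<Sum>(b1,b2)\<leftarrow>D b. sc (eps b1) b2)"
    by (simp only: counit_left)
  also have "\<dots> = (\<Sum>(a1,a2)\<leftarrow>D a. \<Sum>(b1,b2)\<leftarrow>D b. sc (eps a1) (sc (eps b1) (f a2 b2)))"
    by (simp add: lin_map_sum_list[OF bilin_map_left[OF f]] lin_map_sum_list[OF bilin_map_right[OF f]]
        lin_map_scale[OF bilin_map_left[OF f]] lin_map_scale[OF bilin_map_right[OF f]]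
        scale_sum_list sum_list_pairs_swap[where xs="D b"] mult.commute)
  also have "\<dots> = conv (\<lambda>x y. sc (eps x * eps y) 1) f a b"
    unfolding conv_def by (simp flip: scale_mult_left)
  finally show ?thesis by simp
qed

lemma antipode_mult: "S (a * b) = S b * S a"
proof -
  \<comment> \<open>f and g are both convolution inverses of the multiplication m, hence equal\<close>
  define e where "e = (\<lambda>x y. sc (eps x * eps y) (1::'h))"
  define m where "m x y = x * y" for x y :: 'h
  define f where "f x y = S (x * y)" for x y
  define g where "g x y = S y * S x" for x y
  note lin = lin_map_antipode lin_map_id
  have m: "bilin_map sc m"
    unfolding bilin_map_def m_def by (intro conjI allI lin_map_mult_left lin_map_mult_right lin)
  have f: "bilin_map sc f"
    unfolding bilin_map_def f_def
    by (intro conjI allI lin_map_comp[OF lin_map_antipode] lin_map_mult_left lin_map_mult_right lin)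
  have g: "bilin_map sc g"
    unfolding bilin_map_def g_def by (intro conjI allI lin_map_mult_left lin_map_mult_right lin)
  have f_m: "conv f m = e"
  proof (intro ext)
    fix x y
    have "bilin_map sc (\<lambda>u v. S u * v)"
      unfolding bilin_map_def by (intro conjI allI lin_map_mult_left lin_map_mult_right lin)
    from comult_mult_bilin_map[OF this, of x y] show "conv f m x y = e x y"
      unfolding conv_def f_def m_def e_def by (simp add: antipode_left counit_mult)
  qed
  have m_g: "conv m g = e"
  proof (intro ext)
    fix x y
    have "(\<Sum>(y1,y2)\<leftarrow>D y. x1 * y1 * (S y2 * S x2)) = x1 * (\<Sum>(y1,y2)\<leftarrow>D y. y1 * S y2) * S x2"
      for x1 x2 by (simp add: sum_list_pairs_const_mult sum_list_pairs_mult_const mult.assoc)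
    then have "(\<Sum>(y1,y2)\<leftarrow>D y. x1 * y1 * (S y2 * S x2)) = sc (eps y) (x1 * S x2)" for x1 x2
      by (simp add: antipode_right flip: scale_mult_left scale_mult_right)
    then show "conv m g x y = e x y"
      unfolding conv_def m_def g_def e_def
      by (simp flip: scale_sum_list add: antipode_right mult.commute)
  qed
  have "f a b = conv f (conv m g) a b"
    using conv_counit_right[OF f] by (simp add: m_g e_def)
  also have "\<dots> = conv (conv f m) g a b"
    by (rule conv_assoc[OF f m g])
  also have "\<dots> = g a b"
    using conv_counit_left[OF g] by (simp add: f_m e_def)
  finally show ?thesis
    unfolding f_def g_def .
qed

lemma antipode_one: "S 1 = 1"
proof -
  have "bilin_map sc (\<lambda>u v. S u * v)"
    unfolding bilin_map_def by (intro conjI allI lin_map_mult_left lin_map_mult_right lin_map_antipode lin_map_id)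
  then have "(\<Sum>(u,v)\<leftarrow>D 1. S u * v) = S 1 * 1"
    using tens_eq_bilin_map_sum[OF comult_one] by simp
  then show ?thesis
    using antipode_left[of 1] by (simp add: counit_one)
qed

section \<open>Adjoining one element\<close>

lemma subalgebra_comult_preimage:
  assumes B: "subalgebra sc B"
  shows "subalgebra sc {h. \<exists>l. set l \<subseteq> B \<times> B \<and> tens_eq sc (D h) l}" (is "subalgebra sc ?P")
proof (rule subalgebraI)
  show "0 \<in> ?P"
    using comult_zero by force
  show "1 \<in> ?P"
    using comult_one subalgebraD(4)[OF B] by force
  show "sc c a \<in> ?P" if a: "a \<in> ?P" for c a
  proof -
    obtain l where "set l \<subseteq> B \<times> B" "tens_eq sc (D a) l"
      using a by blast
    then show ?thesis
      using tens_eq_trans[OF comult_scale tens_eq_scale] subalgebraD(3)[OF B]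
      by (intro CollectI exI[of _ "map (\<lambda>(u,v). (sc c u, v)) l"]) auto
  qed
  show "a + b \<in> ?P" if ab: "a \<in> ?P" "b \<in> ?P" for a b
  proof -
    obtain l m where "set l \<subseteq> B \<times> B" "tens_eq sc (D a) l" "set m \<subseteq> B \<times> B" "tens_eq sc (D b) m"
      using ab by blast
    then show ?thesis
      using tens_eq_trans[OF comult_add tens_eq_append] by (intro CollectI exI[of _ "l @ m"]) auto
  qed
  show "a * b \<in> ?P" if ab: "a \<in> ?P" "b \<in> ?P" for a b
  proof -
    obtain l m where "set l \<subseteq> B \<times> B" "tens_eq sc (D a) l" "set m \<subseteq> B \<times> B" "tens_eq sc (D b) m"
      using ab by blast
    moreover from this(1,3) have "set (tens_mult l m) \<subseteq> B \<times> B"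
      using subalgebraD(5)[OF B] by (auto simp: tens_mult_def)
    ultimately show ?thesis
      using tens_eq_trans[OF comult_mult tens_eq_tens_mult] by (intro CollectI exI[of _ "tens_mult l m"]) auto
  qed
qed

lemma subalgebra_antipode_preimage:
  assumes B: "subalgebra sc B"
  shows "subalgebra sc {h \<in> B. S h \<in> B}"
  by (intro subalgebraI)
    (simp_all add: subalgebraD[OF B] antipode_mult antipode_one lin_map_zero[OF lin_map_antipode]
      lin_map_add[OF lin_map_antipode] lin_map_scale[OF lin_map_antipode])

lemma hopf_subalgebra_iff:
  "hopf_subalgebra sc D S A \<longleftrightarrow>
     subalgebra sc A \<and> (\<forall>h\<in>A. \<exists>l. set l \<subseteq> A \<times> A \<and> tens_eq sc (D h) l) \<and> (\<forall>h\<in>A. S h \<in> A)"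
proof -
  have "(\<forall>(a,b)\<in>set l. a \<in> A \<and> b \<in> A) \<longleftrightarrow> set l \<subseteq> A \<times> A" for l :: "('h \<times> 'h) list"
    by auto
  then show ?thesis
    unfolding hopf_subalgebra_def by simp
qed

lemma hopf_subalgebra_alg_gen:
  assumes comult: "\<And>g. g \<in> X \<Longrightarrow> \<exists>l. set l \<subseteq> alg_gen sc X \<times> alg_gen sc X \<and> tens_eq sc (D g) l"
    and antipode: "\<And>g. g \<in> X \<Longrightarrow> S g \<in> alg_gen sc X"
  shows "hopf_subalgebra sc D S (alg_gen sc X)"
proof -
  have "alg_gen sc X \<subseteq> {h. \<exists>l. set l \<subseteq> alg_gen sc X \<times> alg_gen sc X \<and> tens_eq sc (D h) l}"
    using comult by (intro alg_gen_least subalgebra_comult_preimage subalgebra_alg_gen) auto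
  moreover have "alg_gen sc X \<subseteq> {h \<in> alg_gen sc X. S h \<in> alg_gen sc X}"
    using antipode alg_gen_superset
    by (intro alg_gen_least subalgebra_antipode_preimage subalgebra_alg_gen) auto
  ultimately show ?thesis
    unfolding hopf_subalgebra_iff using subalgebra_alg_gen by blast
qed

lemma locally_affine_adjoin:
  assumes K: "locally_affine sc D S K" and gen: "alg_gen sc (insert x K) = UNIV"
  shows "locally_affine sc D S UNIV"
  unfolding locally_affine_def
proof (intro allI impI)
  fix F :: "'h set" assume "finite F \<and> F \<subseteq> UNIV"
  define Y where "Y = insert (S x) (F \<union> fst ` set (D x) \<union> snd ` set (D x))"
  obtain G where "finite G" "G \<subseteq> insert x K" and Y_G: "Y \<subseteq> alg_gen sc G"
    using alg_gen_finite_subset[of Y "insert x K"] \<open>finite F \<and> F \<subseteq> UNIV\<close> gen by (auto simp: Y_def)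
  then have "finite (G - {x}) \<and> G - {x} \<subseteq> K"
    by auto
  then obtain A where A: "hopf_subalgebra sc D S A" "A \<subseteq> K" "G - {x} \<subseteq> A" "finitely_generated sc A"
    using K unfolding locally_affine_def by blast
  obtain X0 where "finite X0" "alg_gen sc X0 = A"
    using A(4) unfolding finitely_generated_def by blast
  define B where "B = alg_gen sc (insert x A)"
  have "finitely_generated sc B"
    unfolding B_def finitely_generated_def using \<open>finite X0\<close> \<open>alg_gen sc X0 = A\<close>
    by (intro exI[of _ "insert x X0"]) (auto simp: alg_gen_insert_alg_gen)
  have "A \<subseteq> B"
    unfolding B_def using alg_gen_superset by blast
  have "Y \<subseteq> B"
    using Y_G alg_gen_mono[of G "insert x A"] A(3) unfolding B_def by blast
  have "hopf_subalgebra sc D S B"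
    unfolding B_def
  proof (rule hopf_subalgebra_alg_gen; unfold B_def[symmetric])
    have "set (D x) \<subseteq> B \<times> B" "S x \<in> B"
      using \<open>Y \<subseteq> B\<close> unfolding Y_def by force+
    moreover have "tens_eq sc (D x) (D x)"
      by (simp add: tens_eq_def)
    moreover have "\<exists>l. set l \<subseteq> B \<times> B \<and> tens_eq sc (D g) l" "S g \<in> B" if "g \<in> A" for g
      using A(1) \<open>A \<subseteq> B\<close> that unfolding hopf_subalgebra_iff by blast+
    ultimately show "\<exists>l. set l \<subseteq> B \<times> B \<and> tens_eq sc (D g) l" "S g \<in> B" if "g \<in> insert x A" for g
      using that by blast+
  qed
  then show "\<exists>A. hopf_subalgebra sc D S A \<and> A \<subseteq> UNIV \<and> F \<subseteq> A \<and> finitely_generated sc A"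
    using \<open>finitely_generated sc B\<close> \<open>Y \<subseteq> B\<close> unfolding Y_def by blast
qed

end

theorem proposition3p9:
  fixes sc :: "'k::field_char_0 \<Rightarrow> 'h::ring_1 \<Rightarrow> 'h"
    and \<Delta> :: "'h \<Rightarrow> ('h \<times> 'h) list" and \<epsilon> :: "'h \<Rightarrow> 'k" and S :: "'h \<Rightarrow> 'h"
    and K :: "'h set" and x :: 'h
  assumes "alg_closed_field TYPE('k)"
    and "hopf_algebra sc \<Delta> \<epsilon> S"
    and "hopf_subalgebra sc \<Delta> S K"
    and "locally_affine sc \<Delta> S K"
    and "alg_gen sc (insert x K) = UNIV"
  shows "locally_affine sc \<Delta> S UNIV"
proof -
  interpret hopf sc \<Delta> \<epsilon> S
    by (rule hopf.intro) (rule assms(2))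
  show ?thesis
    by (rule locally_affine_adjoin[OF assms(4,5)])
qed

end
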